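(* For all positive integers $m_1,m_2$ there exists an integer sequence $(f_j)_{j\ge0}$ such that for every $j\in\mathbb{Z}_{\ge0}$: (i) $0\le f_j\le m_1+m_2$; (ii) $f_j+j$ is divisible by $m_1$; and (iii) $((f_j-j)\bmod m_2)\in\{0,1,\dots,m_1\}$.
   Context: For integers $a$ and $b>0$, $(a\bmod b)\in\{0,\dots,b-1\}$ denotes the remainder of $a$ upon division by $b$. *)

theory Defs
  imports Main
begin

end

theory Submission
  imports Defs
begin

text \<open>Take \<open>f\<^sub>j = r + s\<close> with \<open>r = j mod m\<^sub>2\<close> and \<open>s \<in> [0, m\<^sub>1)\<close> the residue making
  \<open>r + s + j\<close> divisible by \<open>m\<^sub>1\<close>. Then \<open>f\<^sub>j - j \<equiv> s (mod m\<^sub>2)\<close>, and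
  \<open>s mod m\<^sub>2 \<le> s < m\<^sub>1\<close>.\<close>

lemma dvd_add_mod_complement:
  fixes a c m :: "'a :: euclidean_ring_cancel"
  shows "m dvd (a + (- c - a) mod m + c)"
proof -
  have "(a + (- c - a) mod m + c) mod m = (a + (- c - a) + c) mod m"
    by (metis mod_add_left_eq mod_add_right_eq)
  then show ?thesis
    by (simp add: mod_eq_0_iff_dvd)
qed

lemma mod_add_diff_cancel_left:
  fixes c s m :: "'a :: euclidean_ring_cancel"
  shows "(c mod m + s - c) mod m = s mod m"
proof -
  have "(c mod m + s - c) mod m = (c + s - c) mod m"
    by (metis mod_add_left_eq mod_diff_left_eq)
  then show ?thesis
    by simp
qed

lemma exists_bounded_dvd_add_mod_diff:
  fixes m1 m2 j :: int
  assumes "m1 > 0" and "m2 > 0"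
  shows "\<exists>f. 0 \<le> f \<and> f \<le> m1 + m2 \<and> m1 dvd (f + j) \<and> (f - j) mod m2 \<in> {0..m1}"
proof -
  define r where "r = j mod m2"
  define s where "s = (- j - r) mod m1"
  have r: "0 \<le> r" "r < m2" and s: "0 \<le> s" "s < m1"
    using assms by (simp_all add: r_def s_def)
  have "m1 dvd (r + s + j)"
    unfolding s_def by (rule dvd_add_mod_complement)
  moreover have "(r + s - j) mod m2 = s mod m2"
    unfolding r_def by (rule mod_add_diff_cancel_left)
  moreover have "s mod m2 \<le> s"
    using s assms by (simp add: zmod_le_nonneg_dividend)
  ultimately show ?thesis
    using r s assms by (intro exI[of _ "r + s"]) (simp add: add.assoc)
qed

theorem lemma16:
  fixes m1 m2 :: int
  assumes "m1 > 0" and "m2 > 0"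
  shows "\<exists>f :: nat \<Rightarrow> int. \<forall>j :: nat.
           0 \<le> f j \<and> f j \<le> m1 + m2 \<and>
           m1 dvd (f j + int j) \<and>
           (f j - int j) mod m2 \<in> {0..m1}"
proof (rule choice, rule allI)
  fix j :: nat
  show "\<exists>f. 0 \<le> f \<and> f \<le> m1 + m2 \<and> m1 dvd (f + int j) \<and> (f - int j) mod m2 \<in> {0..m1}"
    using assms by (rule exists_bounded_dvd_add_mod_diff)
qed

end
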